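(* Let $N\ge 2$, $d\ge 1$, and let $\psi:\mathbb{R}^d\times\mathbb{R}^d\to\mathbb{R}$ be a positive, bounded, continuous function with $K:=\|\psi\|_\infty$. Let $\{t_n\}_{n\in\mathbb{N}_0}$ be an increasing sequence of nonnegative numbers with $t_0=0$, $t_n\to\infty$, and define $\alpha:[0,\infty)\to\{-1,1\}$ by $\alpha(0)=1$, $\alpha(t)=1$ for $t\in(t_{2n},t_{2n+1})$ and $\alpha(t)=-1$ for $t\in[t_{2n+1},t_{2n+2}]$, $n\in\mathbb{N}_0$. Assume $$t_{2n+2}-t_{2n+1}<\frac{\ln 2}{K}\quad\forall n\in\mathbb{N}_0,$$ $$\sum_{p=0}^{\infty}\ln\left(\frac{e^{K(t_{2p+2}-t_{2p+1})}}{2-e^{K(t_{2p+2}-t_{2p+1})}}\right)<+\infty,$$ $$\sum_{p=0}^{\infty}\ln\left(\max\left\{1-e^{-K(t_{2p+1}-t_{2p})},\,1-\frac{\psi_0}{K}\big(1-e^{-K(t_{2p+1}-t_{2p})}\big)\right\}\right)=-\infty,$$ where $\psi_0:=\min_{|y|,|z|\le M^0}\psi(y,z)$ and $M^0:=e^{K\sum_{p=0}^{\infty}(t_{2p+2}-t_{2p+1})}\max_{i=1,\dots,N}|x_i^0|$. Then every solution $\{x_i\}_{i=1,\dots,N}$ of $$\frac{d}{dt}x_i(t)=\frac{1}{N-1}\sum_{j\ne i}\alpha(t)\,\psi(x_i(t),x_j(t))\,(x_j(t)-x_i(t)),\quad t>0,\qquad x_i(0)=x_i^0\in\mathbb{R}^d,\quad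 i=1,\dots,N,$$ converges to consensus, i.e. $\lim_{t\to\infty}d(t)=0$ where $d(t):=\max_{i,j=1,\dots,N}|x_i(t)-x_j(t)|$.
   Context: $\mathbb{N}_0=\{0,1,2,\dots\}$; $|\cdot|$ is the Euclidean norm on $\mathbb{R}^d$. A solution is a continuous function that is $C^1$ on each interval $(t_n,t_{n+1})$ and satisfies the equation there. *)

theory Defs
  imports "HOL-Analysis.Analysis"
begin

definition switch_alpha :: "(nat \<Rightarrow> real) \<Rightarrow> real \<Rightarrow> real" where
  "switch_alpha tt s =
     (if s \<in> (\<Union>n. {tt (2*n+1) .. tt (2*n+2)}) then -1 else 1)"

definition diam :: "nat \<Rightarrow> (nat \<Rightarrow> real \<Rightarrow> 'a::real_normed_vector) \<Rightarrow> real \<Rightarrow> real" where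
  "diam N x s = Max {norm (x i s - x j s) | i j. i < N \<and> j < N}"

end

theory Submission
  imports Defs "HOL-Real_Asymp.Real_Asymp"
begin

text \<open>Since ln (exp a / (2 - exp a)) \<ge> 2 a for 0 \<le> a < ln 2, the repulsive phases
  [t(2p+1), t(2p+2)] have finite total length S. The largest distance of an agent from the origin cannot
  grow in attractive phases and grows at most at rate 2K in repulsive ones, so the agents stay in a fixed
  ball and psi is bounded below along the trajectory by some c > 0. The diameter then shrinks at rate c in
  attractive phases and grows at most at rate 2K in repulsive ones, whence
  d(t) \<le> d(0) exp ((2K + c) S - c t). Both rate estimates rest on the fact that the maximum of finitely
  many differentiable functions grows no faster than the derivatives of the functions attaining it.\<close>

lemma continuous_right_nonincreasing_imp_le:
  fixes g :: "real \<Rightarrow> real"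
  assumes "a \<le> b" and cont: "continuous_on {a..b} g"
    and right: "\<And>t. t \<in> {a<..<b} \<Longrightarrow> eventually (\<lambda>s. g s \<le> g t) (at_right t)"
  shows "g b \<le> g a"
proof -
  have le_from: "g b \<le> g a'" if a': "a < a'" "a' \<le> b" for a'
  proof -
    define S where "S = {t \<in> {a'..b}. g t \<le> g a'}"
    have "closed S"
      unfolding S_def using a' by (intro continuous_on_closed_Collect_le continuous_intros
          continuous_on_subset[OF cont]) auto
    then have "compact ({a'..b} \<inter> S)"
      by (intro compact_Int_closed compact_Icc)
    moreover have "{a'..b} \<inter> S = S"
      by (auto simp: S_def)
    ultimately have "compact S"
      by simp
    moreover have "a' \<in> S" using a' by (simp add: S_def)
    ultimately obtain u where u: "u \<in> S" and u_max: "\<forall>t\<in>S. t \<le> u"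
      using compact_attains_sup[of S] by auto
    have "u = b"
    proof (rule ccontr)
      assume "u \<noteq> b"
      with u have "u \<in> {a<..<b}" using a' by (auto simp: S_def)
      have "eventually (\<lambda>s. u < s \<and> s < b) (at_right u)"
        using \<open>u \<in> {a<..<b}\<close> by (auto simp: eventually_at_right intro: exI[of _ b])
      from this right[OF \<open>u \<in> {a<..<b}\<close>]
      have "eventually (\<lambda>s. (u < s \<and> s < b) \<and> g s \<le> g u) (at_right u)"
        by (rule eventually_conj)
      then obtain s where "u < s" "s < b" "g s \<le> g u"
        using eventually_happens'[OF trivial_limit_at_right_real] by blast
      then have "s \<in> S" using u by (auto simp: S_def)
      with \<open>u < s\<close> u_max show False by auto
    qed
    with u show ?thesis by (simp add: S_def)
  qed
  show ?thesis
  proof (cases "a = b")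
    case False
    with \<open>a \<le> b\<close> have "a < b" by simp
    have "eventually (\<lambda>a'. a < a' \<and> a' < b) (at_right a)"
      using \<open>a < b\<close> by (auto simp: eventually_at_right intro: exI[of _ b])
    then have "eventually (\<lambda>a'. g b \<le> g a') (at_right a)"
      by eventually_elim (simp add: le_from)
    with continuous_on_Icc_at_rightD[OF cont \<open>a < b\<close>] show ?thesis
      by (rule tendsto_lowerbound) simp
  qed simp
qed

lemma DERIV_imp_eventually_le_at_right:
  fixes f :: "real \<Rightarrow> real"
  assumes "(f has_real_derivative D) (at t)" and "D < E"
  shows "eventually (\<lambda>s. f s \<le> f t + E * (s - t)) (at_right t)"
proof -
  have "((\<lambda>s. (f s - f t) / (s - t)) \<longlongrightarrow> D) (at_right t)"
    using assms(1) by (auto simp: has_field_derivative_iff intro: tendsto_mono at_le)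
  then have "eventually (\<lambda>s. (f s - f t) / (s - t) < E) (at_right t)"
    using assms(2) by (rule order_tendstoD)
  with eventually_at_right_less[of t] show ?thesis
    by eventually_elim (simp add: pos_divide_less_eq algebra_simps)
qed

lemma continuous_on_MAX:
  fixes f :: "'j \<Rightarrow> 'a::topological_space \<Rightarrow> real"
  assumes "finite J" and "\<And>j. j \<in> J \<Longrightarrow> continuous_on S (f j)"
  shows "continuous_on S (\<lambda>x. MAX j\<in>J. f j x)"
  using assms
proof (induction J rule: finite_induct)
  case (insert j J)
  then show ?case
    by (cases "J = {}") (auto intro!: continuous_on_max)
qed simp

lemma MAX_eventually_le_at_right:
  fixes f :: "'j \<Rightarrow> real \<Rightarrow> real" and f' :: "'j \<Rightarrow> real"
  assumes J: "finite J" "J \<noteq> {}" and "0 < e"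
    and deriv: "\<And>j. j \<in> J \<Longrightarrow> (f j has_real_derivative f' j) (at t)"
    and slope: "\<And>j. j \<in> J \<Longrightarrow> (\<forall>k\<in>J. f k t \<le> f j t) \<Longrightarrow> f' j < e"
  shows "eventually (\<lambda>s. (MAX j\<in>J. f j s) \<le> (MAX j\<in>J. f j t) + e * (s - t)) (at_right t)"
proof -
  define G where "G = (MAX j\<in>J. f j t)"
  have "eventually (\<lambda>s. f j s \<le> G + e * (s - t)) (at_right t)" if j: "j \<in> J" for j
  proof (cases "\<forall>k\<in>J. f k t \<le> f j t")
    case True
    then have "G = f j t"
      unfolding G_def using J j by (intro Max_eqI) auto
    then show ?thesis
      using DERIV_imp_eventually_le_at_right[OF deriv[OF j] slope[OF j True]] by simp
  next
    case False
    then have "f j t < G"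
      unfolding G_def using J j by (auto simp: Max_gr_iff not_le)
    moreover have "(f j \<longlongrightarrow> f j t) (at_right t)"
      using DERIV_isCont[OF deriv[OF j]] by (auto simp: isCont_def intro: tendsto_mono at_le)
    ultimately have "eventually (\<lambda>s. f j s < G) (at_right t)"
      by (simp add: order_tendstoD)
    with eventually_at_right_less[of t] show ?thesis
      by eventually_elim (use \<open>0 < e\<close> in \<open>smt (verit) mult_pos_pos\<close>)
  qed
  then have "eventually (\<lambda>s. \<forall>j\<in>J. f j s \<le> G + e * (s - t)) (at_right t)"
    using J by (simp add: eventually_ball_finite)
  then show ?thesis
    by eventually_elim (use J in \<open>simp add: G_def Max_le_iff\<close>)
qed

lemma Max_DERIV_nonpos_imp_nonincreasing:
  fixes f f' :: "'j \<Rightarrow> real \<Rightarrow> real"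
  assumes J: "finite J" "J \<noteq> {}" and "a \<le> b"
    and cont: "\<And>j. j \<in> J \<Longrightarrow> continuous_on {a..b} (f j)"
    and deriv: "\<And>j t. j \<in> J \<Longrightarrow> t \<in> {a<..<b} \<Longrightarrow> (f j has_real_derivative f' j t) (at t)"
    and nonpos: "\<And>j t. j \<in> J \<Longrightarrow> t \<in> {a<..<b} \<Longrightarrow> (\<forall>k\<in>J. f k t \<le> f j t) \<Longrightarrow>
      f' j t \<le> 0"
  shows "(MAX j\<in>J. f j b) \<le> (MAX j\<in>J. f j a)"
proof -
  define G where "G t = (MAX j\<in>J. f j t)" for t
  \<comment> \<open>The slack e is needed: a vanishing derivative does not make a function locally nonincreasing.\<close>
  have slack: "G b - e * b \<le> G a - e * a" if "0 < e" for e
  proof (rule continuous_right_nonincreasing_imp_le[OF \<open>a \<le> b\<close>])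
    show "continuous_on {a..b} (\<lambda>t. G t - e * t)"
      unfolding G_def by (intro continuous_intros continuous_on_MAX J cont)
    fix t assume t: "t \<in> {a<..<b}"
    have "eventually (\<lambda>s. G s \<le> G t + e * (s - t)) (at_right t)"
      unfolding G_def
    proof (rule MAX_eventually_le_at_right[OF J \<open>0 < e\<close>])
      show "(f j has_real_derivative f' j t) (at t)" if "j \<in> J" for j
        using deriv that t by blast
      show "f' j t < e" if "j \<in> J" "\<forall>k\<in>J. f k t \<le> f j t" for j
        using nonpos[OF that(1) t that(2)] \<open>0 < e\<close> by simp
    qed
    then show "eventually (\<lambda>s. G s - e * s \<le> G t - e * t) (at_right t)"
      by eventually_elim (simp add: algebra_simps)
  qed
  have "G b \<le> G a"
  proof (rule field_le_epsilon)
    fix \<epsilon> :: real assume "\<epsilon> > 0"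
    define e where "e = \<epsilon> / (b - a + 1)"
    have "0 < e"
      using \<open>\<epsilon> > 0\<close> \<open>a \<le> b\<close> by (simp add: e_def)
    then have "G b \<le> G a + e * (b - a)"
      using slack[OF \<open>0 < e\<close>] by (simp add: right_diff_distrib)
    moreover have "e * (b - a) \<le> \<epsilon>"
      using \<open>\<epsilon> > 0\<close> \<open>a \<le> b\<close> by (simp add: e_def field_simps)
    ultimately show "G b \<le> G a + \<epsilon>"
      by linarith
  qed
  then show ?thesis by (simp add: G_def)
qed

lemma Max_DERIV_le_imp_exp_bound:
  fixes f f' :: "'j \<Rightarrow> real \<Rightarrow> real"
  assumes J: "finite J" "J \<noteq> {}" and "a \<le> b"
    and cont: "\<And>j. j \<in> J \<Longrightarrow> continuous_on {a..b} (f j)"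
    and deriv: "\<And>j t. j \<in> J \<Longrightarrow> t \<in> {a<..<b} \<Longrightarrow> (f j has_real_derivative f' j t) (at t)"
    and rate: "\<And>j t. j \<in> J \<Longrightarrow> t \<in> {a<..<b} \<Longrightarrow> (\<forall>k\<in>J. f k t \<le> f j t) \<Longrightarrow>
      f' j t \<le> r * f j t"
  shows "(MAX j\<in>J. f j b) \<le> (MAX j\<in>J. f j a) * exp (r * (b - a))"
proof -
  have scale_Max: "(MAX j\<in>J. f j t * exp (- r * t)) = (MAX j\<in>J. f j t) * exp (- r * t)" for t
    using mono_Max_commute[of "\<lambda>y. y * exp (- r * t)" "(\<lambda>j. f j t) ` J"] J
    by (simp add: mono_def image_image)
  have "(MAX j\<in>J. f j b * exp (- r * b)) \<le> (MAX j\<in>J. f j a * exp (- r * a))"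
  proof (rule Max_DERIV_nonpos_imp_nonincreasing[OF J \<open>a \<le> b\<close>])
    show "continuous_on {a..b} (\<lambda>t. f j t * exp (- r * t))" if "j \<in> J" for j
      using cont[OF that] by (intro continuous_intros)
    show "((\<lambda>t. f j t * exp (- r * t)) has_real_derivative
        (f' j t - r * f j t) * exp (- r * t)) (at t)" if "j \<in> J" "t \<in> {a<..<b}" for j t
      using deriv[OF that] by (auto intro!: derivative_eq_intros simp: algebra_simps)
    show "(f' j t - r * f j t) * exp (- r * t) \<le> 0"
      if "j \<in> J" "t \<in> {a<..<b}" "\<forall>k\<in>J. f k t * exp (- r * t) \<le> f j t * exp (- r * t)" for j t
      using that rate[OF that(1,2)] by (simp add: mult_nonpos_nonneg)
  qed
  then have "(MAX j\<in>J. f j b) * exp (- r * b) \<le> (MAX j\<in>J. f j a) * exp (- r * a)"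
    by (simp only: scale_Max)
  then show ?thesis
    by (simp add: exp_minus exp_diff right_diff_distrib field_simps)
qed

lemma Max_norm_exp_bound:
  fixes z z' :: "'j \<Rightarrow> real \<Rightarrow> 'a::real_inner"
  assumes J: "finite J" "J \<noteq> {}" and "a \<le> b"
    and cont: "\<And>j. j \<in> J \<Longrightarrow> continuous_on {a..b} (z j)"
    and deriv: "\<And>j t. j \<in> J \<Longrightarrow> t \<in> {a<..<b} \<Longrightarrow> (z j has_vector_derivative z' j t) (at t)"
    and rate: "\<And>j t. j \<in> J \<Longrightarrow> t \<in> {a<..<b} \<Longrightarrow> (\<forall>k\<in>J. norm (z k t) \<le> norm (z j t)) \<Longrightarrow>
      z j t \<bullet> z' j t \<le> r * (norm (z j t))\<^sup>2"
  shows "(MAX j\<in>J. norm (z j b)) \<le> (MAX j\<in>J. norm (z j a)) * exp (r * (b - a))"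
proof -
  have sq_bound: "(MAX j\<in>J. (norm (z j b))\<^sup>2) \<le> (MAX j\<in>J. (norm (z j a))\<^sup>2) * exp (2 * r * (b - a))"
  proof (rule Max_DERIV_le_imp_exp_bound[OF J \<open>a \<le> b\<close>])
    show "continuous_on {a..b} (\<lambda>t. (norm (z j t))\<^sup>2)" if "j \<in> J" for j
      using cont[OF that] by (intro continuous_intros)
    show "((\<lambda>t. (norm (z j t))\<^sup>2) has_real_derivative 2 * (z j t \<bullet> z' j t)) (at t)"
      if "j \<in> J" "t \<in> {a<..<b}" for j t
      using bounded_bilinear.has_vector_derivative[OF bounded_bilinear_inner deriv[OF that] deriv[OF that]]
      by (simp add: power2_norm_eq_inner has_real_derivative_iff_has_vector_derivative inner_commute)
    show "2 * (z j t \<bullet> z' j t) \<le> 2 * r * (norm (z j t))\<^sup>2"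
      if "j \<in> J" "t \<in> {a<..<b}" "\<forall>k\<in>J. (norm (z k t))\<^sup>2 \<le> (norm (z j t))\<^sup>2" for j t
      using that rate[OF that(1,2)] by simp
  qed
  have "norm (z j b) \<le> (MAX j\<in>J. norm (z j a)) * exp (r * (b - a))" if "j \<in> J" for j
  proof (rule power2_le_imp_le)
    have "(norm (z j b))\<^sup>2 \<le> (MAX j\<in>J. (norm (z j a))\<^sup>2) * exp (2 * r * (b - a))"
      using sq_bound J that by (meson Max_ge finite_imageI imageI order_trans)
    also have "(MAX j\<in>J. (norm (z j a))\<^sup>2) \<le> (MAX j\<in>J. norm (z j a))\<^sup>2"
      using J by (auto intro!: Max.boundedI power_mono)
    then have "(MAX j\<in>J. (norm (z j a))\<^sup>2) * exp (2 * r * (b - a))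
        \<le> (MAX j\<in>J. norm (z j a))\<^sup>2 * exp (2 * r * (b - a))"
      by (rule mult_right_mono) simp
    also have "\<dots> = ((MAX j\<in>J. norm (z j a)) * exp (r * (b - a)))\<^sup>2"
      by (simp add: power_mult_distrib mult.assoc flip: exp_double)
    finally show "(norm (z j b))\<^sup>2 \<le> ((MAX j\<in>J. norm (z j a)) * exp (r * (b - a)))\<^sup>2" .
    show "0 \<le> (MAX j\<in>J. norm (z j a)) * exp (r * (b - a))"
      using J by (intro mult_nonneg_nonneg) (auto simp: Max_ge_iff)
  qed
  then show ?thesis
    using J by (simp add: Max_le_iff)
qed

lemma sum_weighted_diffs_le_at_max:
  fixes w p :: "nat \<Rightarrow> real"
  assumes "i < N" and max: "\<And>j. j < N \<Longrightarrow> p j \<le> p i" and weight: "\<And>j. j < N \<Longrightarrow> c \<le> w j"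
  shows "(\<Sum>j\<in>{0..<N} - {i}. w j * (p j - p i)) \<le> c * ((\<Sum>j<N. p j) - real N * p i)"
proof -
  have "(\<Sum>j\<in>{0..<N} - {i}. w j * (p j - p i)) \<le> (\<Sum>j\<in>{0..<N} - {i}. c * (p j - p i))"
    using max weight by (intro sum_mono mult_right_mono_neg) auto
  also have "\<dots> = c * (\<Sum>j<N. p j - p i)"
    using \<open>i < N\<close> by (simp add: sum_distrib_left sum_diff1 atLeast0LessThan)
  also have "\<dots> = c * ((\<Sum>j<N. p j) - real N * p i)"
    by (simp add: sum_subtractf)
  finally show ?thesis .
qed

lemma sum_weighted_diffs_le_bound:
  fixes w p :: "nat \<Rightarrow> real"
  assumes "i < N" and "\<And>j. j < N \<Longrightarrow> \<bar>w j\<bar> \<le> K" and "\<And>j. j < N \<Longrightarrow> \<bar>p j - p i\<bar> \<le> B"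
  shows "(\<Sum>j\<in>{0..<N} - {i}. w j * (p j - p i)) \<le> (real N - 1) * (K * B)"
proof -
  have "(\<Sum>j\<in>{0..<N} - {i}. w j * (p j - p i)) \<le> (\<Sum>j\<in>{0..<N} - {i}. K * B)"
  proof (rule sum_mono)
    fix j assume "j \<in> {0..<N} - {i}"
    moreover have "0 \<le> K"
      using assms(2)[OF \<open>i < N\<close>] by (meson abs_ge_zero order_trans)
    ultimately have "\<bar>w j\<bar> * \<bar>p j - p i\<bar> \<le> K * B"
      using assms by (intro mult_mono) auto
    then show "w j * (p j - p i) \<le> K * B"
      by (metis abs_ge_self abs_mult order_trans)
  qed
  also have "\<dots> = (real N - 1) * (K * B)"
    using \<open>i < N\<close> by (simp add: of_nat_diff)
  finally show ?thesis .
qed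

definition consensus_velocity ::
    "nat \<Rightarrow> (nat \<Rightarrow> nat \<Rightarrow> real) \<Rightarrow> (nat \<Rightarrow> 'a::real_vector) \<Rightarrow> nat \<Rightarrow> 'a"
  where "consensus_velocity N w y i = (1 / (real N - 1)) *\<^sub>R (\<Sum>j\<in>{0..<N} - {i}. w i j *\<^sub>R (y j - y i))"

lemma inner_consensus_velocity:
  "u \<bullet> consensus_velocity N w y i
    = (\<Sum>j\<in>{0..<N} - {i}. w i j * (u \<bullet> y j - u \<bullet> y i)) / (real N - 1)"
  by (simp add: consensus_velocity_def inner_sum_right inner_diff_right)

lemma inner_consensus_velocity_nonpos:
  fixes y :: "nat \<Rightarrow> 'a::real_inner"
  assumes "i < N" and "\<And>j. j < N \<Longrightarrow> norm (y j) \<le> norm (y i)" and "\<And>j. j < N \<Longrightarrow> 0 \<le> w i j"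
  shows "y i \<bullet> consensus_velocity N w y i \<le> 0"
proof -
  have "y i \<bullet> y j \<le> y i \<bullet> y i" if "j < N" for j
    using norm_cauchy_schwarz[of "y i" "y j"] assms(2)[OF that]
    by (simp add: power2_norm_eq_inner[symmetric] power2_eq_square mult_left_mono order_trans)
  then have "(\<Sum>j\<in>{0..<N} - {i}. w i j * (y i \<bullet> y j - y i \<bullet> y i)) \<le> 0"
    using sum_weighted_diffs_le_at_max[of i N "\<lambda>j. y i \<bullet> y j" 0 "w i"] assms by simp
  then show ?thesis
    using \<open>i < N\<close> by (simp add: inner_consensus_velocity divide_nonpos_nonneg)
qed

lemma inner_consensus_velocity_le:
  fixes y :: "nat \<Rightarrow> 'a::real_inner"
  assumes "2 \<le> N" "i < N" and "\<And>j. j < N \<Longrightarrow> norm (y j) \<le> norm (y i)"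
    and "\<And>j. j < N \<Longrightarrow> \<bar>w i j\<bar> \<le> K"
  shows "y i \<bullet> consensus_velocity N w y i \<le> 2 * K * (norm (y i))\<^sup>2"
proof -
  have "\<bar>y i \<bullet> y j - y i \<bullet> y i\<bar> \<le> 2 * (norm (y i))\<^sup>2" if "j < N" for j
  proof -
    have "\<bar>y i \<bullet> y j\<bar> \<le> (norm (y i))\<^sup>2"
      using Cauchy_Schwarz_ineq2[of "y i" "y j"] assms(3)[OF that]
      by (simp add: power2_eq_square mult_left_mono order_trans)
    then show ?thesis
      by (simp add: power2_norm_eq_inner[symmetric])
  qed
  then have "(\<Sum>j\<in>{0..<N} - {i}. w i j * (y i \<bullet> y j - y i \<bullet> y i))
      \<le> (real N - 1) * (K * (2 * (norm (y i))\<^sup>2))"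
    using assms by (intro sum_weighted_diffs_le_bound) auto
  then show ?thesis
    using \<open>2 \<le> N\<close> by (simp add: inner_consensus_velocity divide_le_eq mult_ac)
qed

lemma inner_nonpos_if_norm_add_le:
  fixes u v :: "'a::real_inner"
  assumes "norm (u + v) \<le> norm u"
  shows "u \<bullet> v \<le> 0"
proof -
  have "(u + v) \<bullet> (u + v) \<le> u \<bullet> u"
    using power_mono[OF assms norm_ge_zero, of 2] by (simp add: power2_norm_eq_inner)
  then have "2 * (u \<bullet> v) \<le> - (v \<bullet> v)"
    by (simp add: inner_add inner_commute)
  then show ?thesis
    by (smt (verit) inner_ge_zero)
qed

lemma inner_bounds_at_max_spread:
  fixes y :: "nat \<Rightarrow> 'a::real_inner"
  assumes "\<And>j l. j < N \<Longrightarrow> l < N \<Longrightarrow> norm (y j - y l) \<le> norm (y i - y k)" and "j < N" "i < N" "k < N"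
  shows "(y i - y k) \<bullet> y k \<le> (y i - y k) \<bullet> y j" and "(y i - y k) \<bullet> y j \<le> (y i - y k) \<bullet> y i"
proof -
  have "(y i - y k) \<bullet> (y k - y j) \<le> 0"
    using assms(1)[of i j] assms(2-4) by (intro inner_nonpos_if_norm_add_le) (simp add: algebra_simps)
  then show "(y i - y k) \<bullet> y k \<le> (y i - y k) \<bullet> y j"
    by (simp add: inner_diff_right)
  have "(y i - y k) \<bullet> (y j - y i) \<le> 0"
    using assms(1)[of j k] assms(2-4) by (intro inner_nonpos_if_norm_add_le) (simp add: algebra_simps)
  then show "(y i - y k) \<bullet> y j \<le> (y i - y k) \<bullet> y i"
    by (simp add: inner_diff_right)
qed

lemma inner_diff_consensus_velocity_le:
  fixes y :: "nat \<Rightarrow> 'a::real_inner"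
  assumes "i < N" "k < N"
    and max: "\<And>j l. j < N \<Longrightarrow> l < N \<Longrightarrow> norm (y j - y l) \<le> norm (y i - y k)"
    and weight: "\<And>j l. j < N \<Longrightarrow> l < N \<Longrightarrow> c \<le> w j l"
  shows "(y i - y k) \<bullet> (consensus_velocity N w y i - consensus_velocity N w y k)
    \<le> - c * (real N / (real N - 1)) * (norm (y i - y k))\<^sup>2"
proof -
  define p where "p j = (y i - y k) \<bullet> y j" for j
  define D where "D l = (\<Sum>j\<in>{0..<N} - {l}. w l j * (p j - p l))" for l
  have bounds: "p k \<le> p j" "p j \<le> p i" if "j < N" for j
    using inner_bounds_at_max_spread[of N y i k j] max that assms(1,2) by (auto simp: p_def)
  have neg_D: "(\<Sum>j\<in>{0..<N} - {k}. w k j * (- p j - - p k)) = - D k"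
    by (simp add: D_def sum_negf[symmetric] algebra_simps)
  have "- D k \<le> c * ((\<Sum>j<N. - p j) - real N * - p k)"
    unfolding neg_D[symmetric] using assms bounds by (intro sum_weighted_diffs_le_at_max) auto
  then have "- D k \<le> c * (real N * p k - (\<Sum>j<N. p j))"
    by (simp add: sum_negf algebra_simps)
  moreover have "D i \<le> c * ((\<Sum>j<N. p j) - real N * p i)"
    unfolding D_def using assms bounds by (intro sum_weighted_diffs_le_at_max) auto
  ultimately have "(D i - D k) / (real N - 1) \<le> - c * real N * (p i - p k) / (real N - 1)"
    using \<open>i < N\<close> by (intro divide_right_mono) (auto simp: algebra_simps)
  moreover have "(y i - y k) \<bullet> (consensus_velocity N w y i - consensus_velocity N w y k)
      = (D i - D k) / (real N - 1)"
    by (simp add: inner_diff_right inner_consensus_velocity D_def p_def diff_divide_distrib)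
  moreover have "(norm (y i - y k))\<^sup>2 = p i - p k"
    by (simp add: p_def power2_norm_eq_inner inner_diff_right)
  ultimately show ?thesis
    by simp
qed

lemma strict_mono_interval_containing:
  fixes tt :: "nat \<Rightarrow> real"
  assumes "strict_mono tt" and "filterlim tt at_top sequentially" and "tt 0 \<le> t"
  shows "\<exists>n. tt n \<le> t \<and> t < tt (Suc n)"
proof -
  obtain m where "t < tt m"
    using assms(2) by (auto simp: filterlim_at_top_dense eventually_sequentially)
  define n where "n = (LEAST m. t < tt m)"
  have "t < tt n"
    unfolding n_def using \<open>t < tt m\<close> by (rule LeastI)
  moreover have "n \<noteq> 0"
    using \<open>t < tt n\<close> \<open>tt 0 \<le> t\<close> by (metis not_less)
  moreover have "tt (n - 1) \<le> t"
    using not_less_Least[of "n - 1" "\<lambda>m. t < tt m"] \<open>n \<noteq> 0\<close> by (auto simp: n_def)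
  ultimately show ?thesis
    by (intro exI[of _ "n - 1"]) simp
qed

lemma strict_mono_period_containing:
  fixes tt :: "nat \<Rightarrow> real"
  assumes "strict_mono tt" and "filterlim tt at_top sequentially" and "tt 0 \<le> t"
  shows "\<exists>p. t \<in> {tt (2*p)..tt (2*p+2)}"
proof -
  obtain n where n: "tt n \<le> t" "t < tt (Suc n)"
    using strict_mono_interval_containing[OF assms] by blast
  have "tt (2 * (n div 2)) \<le> tt n" "tt (Suc n) \<le> tt (2 * (n div 2) + 2)"
    by (auto intro!: strict_mono_leD[OF assms(1)])
  with n show ?thesis
    by (intro exI[of _ "n div 2"]) auto
qed

lemma switch_alpha_on_phase:
  fixes tt :: "nat \<Rightarrow> real"
  assumes "strict_mono tt" and "s \<in> {tt n<..<tt (Suc n)}"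
  shows "switch_alpha tt s = (if even n then 1 else -1)"
proof (cases "even n")
  case True
  then obtain m where m: "n = 2 * m" by auto
  have "s \<notin> {tt (2*k+1)..tt (2*k+2)}" for k
  proof (cases "m \<le> k")
    case True
    then have "tt (2*m+1) \<le> tt (2*k+1)" by (intro strict_mono_leD[OF assms(1)]) auto
    then show ?thesis using assms(2) m by auto
  next
    case False
    then have "tt (2*k+2) \<le> tt (2*m)" by (intro strict_mono_leD[OF assms(1)]) auto
    then show ?thesis using assms(2) m by auto
  qed
  then show ?thesis using True by (auto simp: switch_alpha_def)
next
  case False
  then obtain m where "n = 2 * m + 1" by (metis oddE)
  then have "s \<in> {tt (2*m+1)..tt (2*m+2)}" using assms(2) by auto
  then show ?thesis using False by (auto simp: switch_alpha_def)
qed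

lemma two_rate_exp_bound:
  fixes V :: "real \<Rightarrow> real"
  assumes "a \<le> m" "m \<le> b" and "r \<le> R" and "0 \<le> C"
    and first: "\<And>s. s \<in> {a..m} \<Longrightarrow> V s \<le> V a * exp (r * (s - a))"
    and second: "\<And>s. s \<in> {m..b} \<Longrightarrow> V s \<le> V m * exp (R * (s - m))"
    and start: "V a \<le> C * exp (r * a + (R - r) * Q)"
    and s: "s \<in> {a..b}"
  shows "V s \<le> C * exp (r * s + (R - r) * (Q + (b - m)))"
proof -
  have first_part: "V s' \<le> C * exp (r * s' + (R - r) * Q)" if "s' \<in> {a..m}" for s'
  proof -
    have "V s' \<le> V a * exp (r * (s' - a))"
      using first that .
    also have "\<dots> \<le> C * exp (r * a + (R - r) * Q) * exp (r * (s' - a))"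
      using start by (rule mult_right_mono) simp
    finally show ?thesis
      by (simp add: mult.assoc flip: exp_add) (simp add: algebra_simps)
  qed
  have mono_Q: "C * exp (r * s + (R - r) * q) \<le> C * exp (r * s + (R - r) * (Q + (b - m)))"
    if "q \<le> Q + (b - m)" for q
    using that \<open>r \<le> R\<close> \<open>0 \<le> C\<close> by (intro mult_left_mono) (auto intro: mult_left_mono)
  show ?thesis
  proof (cases "s \<le> m")
    case True
    then show ?thesis
      using first_part[of s] s mono_Q[of Q] \<open>m \<le> b\<close> by auto
  next
    case False
    have "V s \<le> V m * exp (R * (s - m))"
      using second s False by auto
    also have "\<dots> \<le> C * exp (r * m + (R - r) * Q) * exp (R * (s - m))"
      using first_part[of m] \<open>a \<le> m\<close> by (intro mult_right_mono) auto
    also have "\<dots> = C * exp (r * s + (R - r) * (Q + (s - m)))"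
      by (simp add: mult.assoc flip: exp_add) (simp add: algebra_simps)
    also have "\<dots> \<le> C * exp (r * s + (R - r) * (Q + (b - m)))"
      using s by (intro mono_Q) auto
    finally show ?thesis .
  qed
qed

lemma switched_exp_bound:
  fixes tt :: "nat \<Rightarrow> real" and V :: "real \<Rightarrow> real"
  assumes mono: "strict_mono tt" and "tt 0 = 0" and lim: "filterlim tt at_top sequentially"
    and S: "\<And>p. (\<Sum>q<p. tt (2*q+2) - tt (2*q+1)) \<le> S" and "r \<le> R" and "0 \<le> V 0"
    and even: "\<And>p s. s \<in> {tt (2*p)..tt (2*p+1)} \<Longrightarrow> V s \<le> V (tt (2*p)) * exp (r * (s - tt (2*p)))"
    and odd: "\<And>p s. s \<in> {tt (2*p+1)..tt (2*p+2)} \<Longrightarrow> V s \<le> V (tt (2*p+1)) * exp (R * (s - tt (2*p+1)))"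
    and "0 \<le> t"
  shows "V t \<le> V 0 * exp (r * t + (R - r) * S)"
proof -
  define Q where "Q p = (\<Sum>q<p. tt (2*q+2) - tt (2*q+1))" for p
  have period: "V s \<le> V 0 * exp (r * s + (R - r) * Q (Suc p))"
    if "V (tt (2*p)) \<le> V 0 * exp (r * tt (2*p) + (R - r) * Q p)" and "s \<in> {tt (2*p)..tt (2*p+2)}" for p s
    using two_rate_exp_bound[OF _ _ \<open>r \<le> R\<close> \<open>0 \<le> V 0\<close> even odd that] strict_mono_leD[OF mono]
    by (simp add: Q_def)
  have start: "V (tt (2*p)) \<le> V 0 * exp (r * tt (2*p) + (R - r) * Q p)" for p
  proof (induction p)
    case 0
    then show ?case using \<open>tt 0 = 0\<close> by (simp add: Q_def)
  next
    case (Suc p)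
    then show ?case
      using period[of p "tt (2*p+2)"] strict_mono_leD[OF mono, of "2*p" "2*p+2"] by simp
  qed
  obtain p where "t \<in> {tt (2*p)..tt (2*p+2)}"
    using strict_mono_period_containing[OF mono lim] \<open>tt 0 = 0\<close> \<open>0 \<le> t\<close> by auto
  then have "V t \<le> V 0 * exp (r * t + (R - r) * Q (Suc p))"
    by (rule period[OF start])
  also have "\<dots> \<le> V 0 * exp (r * t + (R - r) * S)"
    using S[of "Suc p"] \<open>r \<le> R\<close> \<open>0 \<le> V 0\<close>
    by (intro mult_left_mono) (auto intro: mult_left_mono simp: Q_def)
  finally show ?thesis .
qed

lemma ln_exp_div_two_minus_exp_ge:
  fixes a :: real
  assumes "0 \<le> a" and "a < ln 2"
  shows "2 * a \<le> ln (exp a / (2 - exp a))"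
proof -
  have "exp a < 2"
    using assms(2) by (metis exp_less_cancel_iff exp_ln zero_less_numeral)
  have "(exp a - 1)\<^sup>2 \<ge> 0" by simp
  then have "2 - exp a \<le> exp (- a)"
    by (simp add: exp_minus field_simps power2_eq_square)
  then have "ln (2 - exp a) \<le> - a"
    using \<open>exp a < 2\<close> by (metis diff_gt_0_iff_gt ln_exp ln_le_cancel_iff exp_gt_zero)
  then show ?thesis
    using \<open>exp a < 2\<close> by (simp add: ln_div)
qed

lemma summable_if_summable_ln_exp_div:
  fixes d :: "nat \<Rightarrow> real"
  assumes "0 < K" and "\<And>p. 0 \<le> d p" and "\<And>p. d p < ln 2 / K"
    and "summable (\<lambda>p. ln (exp (K * d p) / (2 - exp (K * d p))))"
  shows "summable d"
proof (rule summable_comparison_test)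
  show "summable (\<lambda>p. ln (exp (K * d p) / (2 - exp (K * d p))) / (2 * K))"
    using assms(4) by (rule summable_divide)
  have "norm (d p) \<le> ln (exp (K * d p) / (2 - exp (K * d p))) / (2 * K)" for p
  proof -
    have "2 * (K * d p) \<le> ln (exp (K * d p) / (2 - exp (K * d p)))"
      using assms(1) assms(2,3)[of p] by (intro ln_exp_div_two_minus_exp_ge) (simp_all add: field_simps)
    then show ?thesis
      using assms(1) assms(2)[of p] by (simp add: field_simps)
  qed
  then show "\<exists>M. \<forall>p\<ge>M. norm (d p) \<le> ln (exp (K * d p) / (2 - exp (K * d p))) / (2 * K)"
    by blast
qed

lemma le_SUP_abs_if_bounded:
  fixes f :: "'b \<Rightarrow> real"
  assumes "bounded (range f)"
  shows "f p \<le> (SUP q. \<bar>f q\<bar>)"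
proof -
  obtain B where "\<And>q. \<bar>f q\<bar> \<le> B"
    using assms by (auto simp: bounded_iff)
  then have "bdd_above (range (\<lambda>q. \<bar>f q\<bar>))"
    by (intro bdd_aboveI2)
  then show ?thesis
    by (rule cSUP_upper2[where x = p]) auto
qed

locale switched_consensus =
  fixes N :: nat and psi :: "'a::euclidean_space \<Rightarrow> 'a \<Rightarrow> real" and K :: real
    and tt :: "nat \<Rightarrow> real" and x :: "nat \<Rightarrow> real \<Rightarrow> 'a"
  assumes N_ge_2: "2 \<le> N"
    and psi_pos: "\<And>y z. 0 < psi y z" and psi_le_K: "\<And>y z. psi y z \<le> K"
    and psi_cont: "continuous_on UNIV (\<lambda>(y, z). psi y z)"
    and tt_mono: "strict_mono tt" and tt_0: "tt 0 = 0" and tt_lim: "filterlim tt at_top sequentially"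
    and repulsive_summable: "summable (\<lambda>p. tt (2*p+2) - tt (2*p+1))"
    and x_cont: "\<And>i. i < N \<Longrightarrow> continuous_on {0..} (x i)"
    and x_deriv: "\<And>i n s. i < N \<Longrightarrow> s \<in> {tt n<..<tt (Suc n)} \<Longrightarrow>
      (x i has_vector_derivative
        consensus_velocity N (\<lambda>i j. switch_alpha tt s * psi (x i s) (x j s)) (\<lambda>j. x j s) i) (at s)"
begin

definition repulsive_time :: real
  where "repulsive_time = (\<Sum>p. tt (2*p+2) - tt (2*p+1))"

definition radius :: "real \<Rightarrow> real"
  where "radius t = (MAX i\<in>{0..<N}. norm (x i t))"

definition phase_velocity :: "nat \<Rightarrow> real \<Rightarrow> nat \<Rightarrow> 'a"
  where "phase_velocity n s =
    consensus_velocity N (\<lambda>i j. (if even n then 1 else -1) * psi (x i s) (x j s)) (\<lambda>j. x j s)"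

lemma K_pos: "0 < K"
  using psi_pos psi_le_K by (meson less_le_trans)

lemma tt_less_Suc: "tt n < tt (Suc n)"
  by (simp add: strict_monoD[OF tt_mono])

lemma tt_nonneg: "0 \<le> tt n"
  using strict_mono_leD[OF tt_mono, of 0 n] tt_0 by simp

lemma partial_repulsive_time_le: "(\<Sum>q<p. tt (2*q+2) - tt (2*q+1)) \<le> repulsive_time"
  unfolding repulsive_time_def
  using repulsive_summable by (intro sum_le_suminf) (auto intro: less_imp_le[OF tt_less_Suc])

lemma diam_eq_MAX: "diam N x t = (MAX p\<in>{0..<N} \<times> {0..<N}. norm (x (fst p) t - x (snd p) t))"
  unfolding diam_def by (rule arg_cong[where f = Max]) (auto simp: image_iff; force)

lemma diam_nonneg: "0 \<le> diam N x t"
proof -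
  have "(0, 0) \<in> {0..<N} \<times> {0..<N}"
    using N_ge_2 by simp
  then show ?thesis
    unfolding diam_eq_MAX by (auto simp: Max_ge_iff)
qed

lemma radius_nonneg: "0 \<le> radius t"
proof -
  have "0 \<in> {0..<N}"
    using N_ge_2 by simp
  then show ?thesis
    unfolding radius_def by (auto simp: Max_ge_iff)
qed

lemma x_deriv_on_phase:
  assumes "i < N" and "s \<in> {tt n<..<tt (Suc n)}"
  shows "(x i has_vector_derivative phase_velocity n s i) (at s)"
  using x_deriv[OF assms] switch_alpha_on_phase[OF tt_mono assms(2)] by (simp add: phase_velocity_def)

lemma x_cont_on_phase: "i < N \<Longrightarrow> continuous_on {tt n..t} (x i)"
  using tt_nonneg[of n] by (auto intro: continuous_on_subset[OF x_cont])

lemma radius_on_phase: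
  assumes "t \<in> {tt n..tt (Suc n)}"
  shows "radius t \<le> radius (tt n) * exp ((if even n then 0 else 2 * K) * (t - tt n))"
  unfolding radius_def
proof (rule Max_norm_exp_bound[where z' = "\<lambda>i s. phase_velocity n s i"])
  show "finite {0..<N}" "{0..<N} \<noteq> {}" "tt n \<le> t"
    using N_ge_2 assms by auto
  show "continuous_on {tt n..t} (x i)" if "i \<in> {0..<N}" for i
    using that by (simp add: x_cont_on_phase)
  show "(x i has_vector_derivative phase_velocity n s i) (at s)" if "i \<in> {0..<N}" "s \<in> {tt n<..<t}" for i s
    using that assms by (intro x_deriv_on_phase) auto
  show "x i s \<bullet> phase_velocity n s i \<le> (if even n then 0 else 2 * K) * (norm (x i s))\<^sup>2"
    if "i \<in> {0..<N}" "s \<in> {tt n<..<t}" "\<forall>j\<in>{0..<N}. norm (x j s) \<le> norm (x i s)" for i s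
    using that N_ge_2 psi_pos psi_le_K less_imp_le[OF psi_pos]
    by (auto simp: phase_velocity_def intro!: inner_consensus_velocity_nonpos inner_consensus_velocity_le)
qed

lemma inner_diff_phase_velocity_le:
  assumes "i < N" "k < N" and "0 \<le> c"
    and c_le_psi: "\<And>j l. j < N \<Longrightarrow> l < N \<Longrightarrow> c \<le> psi (x j s) (x l s)"
    and max: "\<And>j l. j < N \<Longrightarrow> l < N \<Longrightarrow> norm (x j s - x l s) \<le> norm (x i s - x k s)"
  shows "(x i s - x k s) \<bullet> (phase_velocity n s i - phase_velocity n s k)
    \<le> (if even n then - c else 2 * K) * (norm (x i s - x k s))\<^sup>2"
proof -
  define \<sigma> where "\<sigma> = (if even n then c else - K)"
  define q where "q = real N / (real N - 1)"
  have "(x i s - x k s) \<bullet> (phase_velocity n s i - phase_velocity n s k)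
      \<le> - \<sigma> * q * (norm (x i s - x k s))\<^sup>2"
    unfolding phase_velocity_def \<sigma>_def q_def using assms psi_le_K
    by (intro inner_diff_consensus_velocity_le) (auto simp: max)
  also have "\<dots> \<le> (if even n then - c else 2 * K) * (norm (x i s - x k s))\<^sup>2"
  proof (rule mult_right_mono)
    have "1 \<le> q" "q \<le> 2"
      using N_ge_2 by (simp_all add: q_def field_simps)
    then have "c \<le> c * q" "K * q \<le> K * 2"
      using mult_left_mono[of 1 q c] mult_left_mono[of q 2 K] \<open>0 \<le> c\<close> K_pos by simp_all
    then show "- \<sigma> * q \<le> (if even n then - c else 2 * K)"
      by (simp add: \<sigma>_def mult_ac)
  qed simp
  finally show ?thesis .
qed

lemma diam_on_phase:
  assumes "t \<in> {tt n..tt (Suc n)}" and "0 \<le> c"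
    and c_le_psi: "\<And>i j s. i < N \<Longrightarrow> j < N \<Longrightarrow> 0 \<le> s \<Longrightarrow> c \<le> psi (x i s) (x j s)"
  shows "diam N x t \<le> diam N x (tt n) * exp ((if even n then - c else 2 * K) * (t - tt n))"
  unfolding diam_eq_MAX
proof (rule Max_norm_exp_bound[where z = "\<lambda>p s. x (fst p) s - x (snd p) s"
      and z' = "\<lambda>p s. phase_velocity n s (fst p) - phase_velocity n s (snd p)"])
  show "finite ({0..<N} \<times> {0..<N})" "{0..<N} \<times> {0..<N} \<noteq> {}" "tt n \<le> t"
    using N_ge_2 assms by auto
  show "continuous_on {tt n..t} (\<lambda>s. x (fst p) s - x (snd p) s)" if "p \<in> {0..<N} \<times> {0..<N}" for p
    using that by (auto intro!: continuous_intros x_cont_on_phase)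
  show "((\<lambda>s. x (fst p) s - x (snd p) s) has_vector_derivative
      phase_velocity n s (fst p) - phase_velocity n s (snd p)) (at s)"
    if "p \<in> {0..<N} \<times> {0..<N}" "s \<in> {tt n<..<t}" for p s
    using that assms by (auto intro!: derivative_intros x_deriv_on_phase)
  show "(x (fst p) s - x (snd p) s) \<bullet> (phase_velocity n s (fst p) - phase_velocity n s (snd p))
      \<le> (if even n then - c else 2 * K) * (norm (x (fst p) s - x (snd p) s))\<^sup>2"
    if "p \<in> {0..<N} \<times> {0..<N}" and "s \<in> {tt n<..<t}"
      and "\<forall>q\<in>{0..<N} \<times> {0..<N}. norm (x (fst q) s - x (snd q) s) \<le> norm (x (fst p) s - x (snd p) s)"
    for p s
    using that tt_nonneg[of n] \<open>0 \<le> c\<close> c_le_psi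
    by (intro inner_diff_phase_velocity_le) auto
qed

lemma radius_bound:
  assumes "0 \<le> t"
  shows "radius t \<le> radius 0 * exp (2 * K * repulsive_time)"
proof -
  have "radius t \<le> radius 0 * exp (0 * t + (2 * K - 0) * repulsive_time)"
  proof (rule switched_exp_bound[OF tt_mono tt_0 tt_lim partial_repulsive_time_le _ _ _ _ assms])
    show "0 \<le> 2 * K" "0 \<le> radius 0"
      using K_pos radius_nonneg by auto
    show "radius s \<le> radius (tt (2*p)) * exp (0 * (s - tt (2*p)))" if "s \<in> {tt (2*p)..tt (2*p+1)}" for p s
      using radius_on_phase[of s "2*p"] that by simp
    show "radius s \<le> radius (tt (2*p+1)) * exp (2 * K * (s - tt (2*p+1)))" if "s \<in> {tt (2*p+1)..tt (2*p+2)}" for p s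
      using radius_on_phase[of s "2*p+1"] that by simp
  qed
  then show ?thesis by simp
qed

lemma psi_bounded_below_on_trajectory:
  obtains c where "0 < c" and "\<And>i j s. i < N \<Longrightarrow> j < N \<Longrightarrow> 0 \<le> s \<Longrightarrow> c \<le> psi (x i s) (x j s)"
proof -
  define B where "B = cball (0::'a) (radius 0 * exp (2 * K * repulsive_time))"
  have "0 \<in> B"
    using mult_nonneg_nonneg[OF radius_nonneg[of 0] exp_ge_zero] by (simp add: B_def)
  then have "compact (B \<times> B)" "B \<times> B \<noteq> {}"
    by (auto simp: B_def intro!: compact_Times)
  from continuous_attains_inf[OF this continuous_on_subset[OF psi_cont subset_UNIV]]
  obtain q where q_min: "\<forall>q'\<in>B \<times> B. (\<lambda>(y, z). psi y z) q \<le> (\<lambda>(y, z). psi y z) q'"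
    by blast
  obtain y0 z0 where psi_min: "\<forall>y\<in>B. \<forall>z\<in>B. psi y0 z0 \<le> psi y z"
    using q_min by (cases q) auto
  have "x i s \<in> B" if "i < N" "0 \<le> s" for i s
  proof -
    have "norm (x i s) \<le> radius s"
      unfolding radius_def using that by (intro Max_ge) auto
    with radius_bound[OF \<open>0 \<le> s\<close>] show ?thesis
      by (simp add: B_def)
  qed
  with psi_min have "psi y0 z0 \<le> psi (x i s) (x j s)" if "i < N" "j < N" "0 \<le> s" for i j s
    using that by blast
  then show ?thesis
    using that[of "psi y0 z0"] psi_pos by blast
qed

lemma diam_bound:
  assumes "0 < c"
    and c_le_psi: "\<And>i j s. i < N \<Longrightarrow> j < N \<Longrightarrow> 0 \<le> s \<Longrightarrow> c \<le> psi (x i s) (x j s)"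
    and "0 \<le> t"
  shows "diam N x t \<le> diam N x 0 * exp (- c * t + (2 * K + c) * repulsive_time)"
proof -
  have "diam N x t \<le> diam N x 0 * exp (- c * t + (2 * K - - c) * repulsive_time)"
  proof (rule switched_exp_bound[OF tt_mono tt_0 tt_lim partial_repulsive_time_le _ diam_nonneg _ _ \<open>0 \<le> t\<close>])
    show "- c \<le> 2 * K"
      using K_pos \<open>0 < c\<close> by simp
    show "diam N x s \<le> diam N x (tt (2*p)) * exp (- c * (s - tt (2*p)))" if "s \<in> {tt (2*p)..tt (2*p+1)}" for p s
      using diam_on_phase[of s "2*p" c] that \<open>0 < c\<close> c_le_psi by simp
    show "diam N x s \<le> diam N x (tt (2*p+1)) * exp (2 * K * (s - tt (2*p+1)))" if "s \<in> {tt (2*p+1)..tt (2*p+2)}" for p s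
      using diam_on_phase[of s "2*p+1" c] that \<open>0 < c\<close> c_le_psi by simp
  qed
  then show ?thesis by simp
qed

theorem diam_tendsto_zero: "((\<lambda>t. diam N x t) \<longlongrightarrow> 0) at_top"
proof -
  obtain c where "0 < c"
    and c_le_psi: "\<And>i j s. i < N \<Longrightarrow> j < N \<Longrightarrow> 0 \<le> s \<Longrightarrow> c \<le> psi (x i s) (x j s)"
    using psi_bounded_below_on_trajectory by blast
  define A where "A = (2 * K + c) * repulsive_time"
  have "((\<lambda>t. exp (- c * t + A)) \<longlongrightarrow> 0) at_top"
    using \<open>0 < c\<close> by real_asymp
  then have bound_tendsto: "((\<lambda>t. diam N x 0 * exp (- c * t + A)) \<longlongrightarrow> 0) at_top"
    by (rule tendsto_mult_right_zero)
  have "eventually (\<lambda>t. diam N x t \<le> diam N x 0 * exp (- c * t + A)) at_top"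
    using eventually_ge_at_top[of 0]
    by eventually_elim (use diam_bound[OF \<open>0 < c\<close> c_le_psi] in \<open>simp add: A_def\<close>)
  moreover have "eventually (\<lambda>t. 0 \<le> diam N x t) at_top"
    by (simp add: diam_nonneg)
  ultimately show ?thesis
    using tendsto_sandwich[OF _ _ tendsto_const bound_tendsto] by blast
qed

end

theorem theorem2p1:
  fixes N :: nat
    and psi :: "'a::euclidean_space \<Rightarrow> 'a \<Rightarrow> real"
    and tt :: "nat \<Rightarrow> real"
    and x :: "nat \<Rightarrow> real \<Rightarrow> 'a"
    and K M0 psi0 :: real
  assumes N2: "N \<ge> 2"
    and psi_pos: "\<And>y z. psi y z > 0"
    and psi_bdd: "bounded (range (\<lambda>(y, z). psi y z))"
    and psi_cont: "continuous_on UNIV (\<lambda>(y, z). psi y z)"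
    and K_def: "K = (SUP p. \<bar>psi (fst p) (snd p)\<bar>)"
    and t_mono: "strict_mono tt"
    and t0: "tt 0 = 0"
    and t_lim: "filterlim tt at_top sequentially"
    and neg_short: "\<And>n. tt (2*n+2) - tt (2*n+1) < ln 2 / K"
    and sum1: "summable (\<lambda>p. ln (exp (K * (tt (2*p+2) - tt (2*p+1)))
                                  / (2 - exp (K * (tt (2*p+2) - tt (2*p+1))))))"
    and M0_def: "M0 = exp (K * (\<Sum>p. tt (2*p+2) - tt (2*p+1)))
                      * Max ((\<lambda>i. norm (x i 0)) ` {0..<N})"
    and psi0_def: "psi0 = Inf ((\<lambda>(y, z). psi y z) ` (cball 0 M0 \<times> cball 0 M0))"
    and sum2: "filterlim (\<lambda>n. \<Sum>p<n. ln (max (1 - exp (- K * (tt (2*p+1) - tt (2*p))))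
                    (1 - psi0 / K * (1 - exp (- K * (tt (2*p+1) - tt (2*p)))))))
                 at_bot sequentially"
    and x_cont: "\<And>i. i < N \<Longrightarrow> continuous_on {0..} (x i)"
    and x_ode: "\<And>i n s. i < N \<Longrightarrow> s \<in> {tt n <..< tt (Suc n)} \<Longrightarrow>
        (x i has_vector_derivative
           ((1 / (real N - 1)) *\<^sub>R
             (\<Sum>j\<in>{0..<N} - {i}. (switch_alpha tt s * psi (x i s) (x j s)) *\<^sub>R (x j s - x i s))))
        (at s)"
  shows "((\<lambda>s. diam N x s) \<longlongrightarrow> 0) at_top"
proof -
  have psi_le_K: "psi y z \<le> K" for y z
    using le_SUP_abs_if_bounded[OF psi_bdd, of "(y, z)"] by (simp add: K_def case_prod_beta)
  have "0 < K"
    using psi_pos psi_le_K by (meson less_le_trans)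
  have "0 \<le> tt (2*p+2) - tt (2*p+1)" for p
    using strict_monoD[OF t_mono, of "2*p+1" "2*p+2"] by simp
  then have "summable (\<lambda>p. tt (2*p+2) - tt (2*p+1))"
    by (rule summable_if_summable_ln_exp_div[OF \<open>0 < K\<close> _ neg_short sum1])
  then interpret switched_consensus N psi K tt x
    using N2 psi_pos psi_le_K psi_cont t_mono t0 t_lim x_cont x_ode
    by unfold_locales (simp_all add: consensus_velocity_def)
  show ?thesis
    by (rule diam_tendsto_zero)
qed

end
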